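(* The limit $\lim_{n\to\infty}\deg(s:S_n\to S_n)^{1/n}$ exists and satisfies \[1.12462\leq\lim_{n\to\infty}\deg(s:S_n\to S_n)^{1/n}\leq 4.\]
   Context: For finite sets $X,Y$ and $f:X\to Y$, $\deg(f)=\frac{1}{|X|}\sum_{y\in Y}|f^{-1}(y)|^2$. $S_n$ is the set of permutations of $\{1,\dots,n\}$, viewed as words. West's stack-sorting map $s$ is defined recursively on words with distinct positive integer entries: $s$ sends the empty word to itself, and if $\pi$ has largest entry $m$ and $\pi=LmR$ (with $L,R$ words), then $s(\pi)=s(L)\,s(R)\,m$. It restricts to a map $s:S_n\to S_n$. *)

theory Defs
  imports Complex_Main
begin

definition map_deg :: "('a \<Rightarrow> 'b) \<Rightarrow> 'a set \<Rightarrow> 'b set \<Rightarrow> real" where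
  "map_deg f X Y = (\<Sum>y\<in>Y. real (card {x\<in>X. f x = y}) ^ 2) / real (card X)"

function stack_sort :: "nat list \<Rightarrow> nat list" where
  "stack_sort w =
     (if w = [] then []
      else (let m = Max (set w);
                L = takeWhile (\<lambda>x. x \<noteq> m) w;
                R = tl (dropWhile (\<lambda>x. x \<noteq> m) w)
            in stack_sort L @ stack_sort R @ [m]))"
  by pat_completeness auto
termination
proof (relation "measure length", goal_cases)
  case 1 then show ?case by auto
next
  case (2 w m L)
  have "m \<in> set w" using 2 by simp
  then have "dropWhile (\<lambda>x. x \<noteq> m) w \<noteq> []" by (simp add: dropWhile_eq_Nil_conv)
  moreover have "length w = length L + length (dropWhile (\<lambda>x. x \<noteq> m) w)"
    using 2 by (simp add: length_append[symmetric] del: length_append)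
  ultimately show ?case by simp
next
  case (3 w m L R)
  have "m \<in> set w" using 3 by simp
  then have "dropWhile (\<lambda>x. x \<noteq> m) w \<noteq> []" by (simp add: dropWhile_eq_Nil_conv)
  moreover have "length (dropWhile (\<lambda>x. x \<noteq> m) w) \<le> length w" by (rule length_dropWhile_le)
  ultimately have "length (dropWhile (\<lambda>x. x \<noteq> m) w) - 1 < length w"
    by (cases "dropWhile (\<lambda>x. x \<noteq> m) w") auto
  then show ?case using 3 by simp
qed

definition perms :: "nat \<Rightarrow> nat list set" where
  "perms n = {w. distinct w \<and> set w = {1..n}}"

end

theory Submission
  imports Defs "HOL-Combinatorics.Multiset_Permutations" "HOL-Real_Asymp.Real_Asymp"
begin

(* The degree of s on S_n is c_n / n!, where c_n counts the pairs of permutations with the same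
   image under s. Cutting two such permutations of {1..n+1} at the entry n+1 into pairs of
   permutations of complementary sets gives \<Sum>_k binom(n,k) c_k c_(n-k) \<le> c_(n+1), so
   a_n = c_n / n! satisfies \<Sum>_k a_k a_(n-k) \<le> (n+1) a_(n+1). In particular
   a_i a_j \<le> (i+j+1) a_(i+j+1): ln a_n is superadditive up to a logarithmic error, and a
   Fekete-type argument shows that a_n^(1/n) converges. The limit is at most 4 because a
   permutation is determined by its image under s together with the 2n-bit shape of its
   decreasing binary tree. It is at least 9/8 > 1.12462 because the convolution inequality
   propagates lower bounds: starting from a_0, a_1, a_2 \<ge> 1, 1, 2 it forces
   a_n \<ge> (9/8)^(n+1) for all n \<ge> 2. *)

section \<open>West's stack-sorting map on permutations\<close>

declare stack_sort.simps [simp del]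

lemma stack_sort_Nil [simp]: "stack_sort [] = []"
  by (simp add: stack_sort.simps)

lemma max_split_parts:
  assumes "\<forall>x\<in>set L \<union> set R. x < m"
  shows "Max (set (L @ m # R)) = m"
    and "takeWhile (\<lambda>x. x \<noteq> m) (L @ m # R) = L"
    and "tl (dropWhile (\<lambda>x. x \<noteq> m) (L @ m # R)) = R"
proof -
  have "\<forall>x\<in>set L. x \<noteq> m"
    using assms by auto
  then show "takeWhile (\<lambda>x. x \<noteq> m) (L @ m # R) = L"
    and "tl (dropWhile (\<lambda>x. x \<noteq> m) (L @ m # R)) = R"
    by (simp_all add: takeWhile_append2 dropWhile_append2)
  show "Max (set (L @ m # R)) = m"
    using assms by (intro Max_eqI) (auto intro: less_imp_le)
qed

lemma stack_sort_max_split: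
  assumes "\<forall>x\<in>set L \<union> set R. x < m"
  shows "stack_sort (L @ m # R) = stack_sort L @ stack_sort R @ [m]"
  unfolding stack_sort.simps[of "L @ m # R"] Let_def max_split_parts[OF assms] by simp

lemma distinct_max_split:
  fixes w :: "nat list"
  assumes "distinct w" "w \<noteq> []"
  obtains L m R where "w = L @ m # R" "\<forall>x\<in>set L \<union> set R. x < m"
proof -
  define m where "m = Max (set w)"
  have "m \<in> set w" and le_m: "\<And>x. x \<in> set w \<Longrightarrow> x \<le> m"
    using assms(2) by (simp_all add: m_def)
  then obtain L R where w: "w = L @ m # R" by (blast dest: split_list)
  moreover have "\<forall>x\<in>set L \<union> set R. x < m"
    using assms(1) le_m unfolding w by (fastforce simp: order.strict_iff_order)
  ultimately show thesis by (rule that)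
qed

lemma distinct_max_split_induct [consumes 1, case_names Nil max_split]:
  fixes w :: "nat list"
  assumes "distinct w"
    and "P []"
    and "\<And>L m R. distinct (L @ m # R) \<Longrightarrow> \<forall>x\<in>set L \<union> set R. x < m \<Longrightarrow> P L \<Longrightarrow> P R
          \<Longrightarrow> P (L @ m # R)"
  shows "P w"
  using assms(1)
proof (induction w rule: length_induct)
  case (1 w)
  show ?case
  proof (cases "w = []")
    case True
    then show ?thesis using assms(2) by simp
  next
    case False
    with "1.prems" obtain L m R where w: "w = L @ m # R" and less: "\<forall>x\<in>set L \<union> set R. x < m"
      by (rule distinct_max_split)
    have "P L" "P R"
      using "1.IH" "1.prems" unfolding w by simp_all
    with less show ?thesis
      using assms(3) "1.prems" unfolding w by blast
  qed
qed

lemma set_stack_sort [simp]: "distinct w \<Longrightarrow> set (stack_sort w) = set w"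
  by (induction w rule: distinct_max_split_induct) (auto simp: stack_sort_max_split)

lemma distinct_stack_sort [simp]: "distinct w \<Longrightarrow> distinct (stack_sort w)"
  by (induction w rule: distinct_max_split_induct) (auto simp: stack_sort_max_split)

lemma length_stack_sort [simp]: "distinct w \<Longrightarrow> length (stack_sort w) = length w"
  by (metis distinct_card distinct_stack_sort set_stack_sort)

lemma stack_sort_map:
  assumes "distinct w" "strict_mono_on (set w) f"
  shows "stack_sort (map f w) = map f (stack_sort w)"
  using assms
proof (induction w rule: distinct_max_split_induct)
  case Nil
  then show ?case by simp
next
  case (max_split L m R)
  have "\<forall>y\<in>set (map f L) \<union> set (map f R). y < f m"
    using max_split.hyps(2) max_split.prems by (auto intro: strict_mono_onD)
  then have "stack_sort (map f (L @ m # R)) = stack_sort (map f L) @ stack_sort (map f R) @ [f m]"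
    by (simp add: stack_sort_max_split)
  moreover have "strict_mono_on (set L) f" "strict_mono_on (set R) f"
    using monotone_on_subset[OF max_split.prems] by auto
  ultimately show ?case
    using max_split.IH max_split.hyps(2) by (simp add: stack_sort_max_split)
qed

(* Preorder code of the shape of the decreasing binary tree of w. *)
function shape_code :: "nat list \<Rightarrow> bool list" where
  "shape_code w =
     (if w = [] then []
      else (let m = Max (set w);
                L = takeWhile (\<lambda>x. x \<noteq> m) w;
                R = tl (dropWhile (\<lambda>x. x \<noteq> m) w)
            in True # shape_code L @ False # shape_code R))"
  by pat_completeness auto
termination
proof (relation "measure length", goal_cases)
  case (2 w m L)
  then have "dropWhile (\<lambda>x. x \<noteq> m) w \<noteq> []"
    by (simp add: dropWhile_eq_Nil_conv)
  moreover have "length w = length L + length (dropWhile (\<lambda>x. x \<noteq> m) w)"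
    using 2 by (simp flip: length_append)
  ultimately show ?case by simp
next
  case (3 w m)
  then show ?case
    using length_dropWhile_le[of "\<lambda>x. x \<noteq> m" w] by (cases w) auto
qed simp

declare shape_code.simps [simp del]

lemma shape_code_Nil [simp]: "shape_code [] = []"
  by (simp add: shape_code.simps)

lemma shape_code_max_split:
  assumes "\<forall>x\<in>set L \<union> set R. x < m"
  shows "shape_code (L @ m # R) = True # shape_code L @ False # shape_code R"
  unfolding shape_code.simps[of "L @ m # R"] Let_def max_split_parts[OF assms] by simp

lemma length_shape_code: "distinct w \<Longrightarrow> length (shape_code w) = 2 * length w"
  by (induction w rule: distinct_max_split_induct) (simp_all add: shape_code_max_split)

lemma shape_code_prefix_free:
  assumes "distinct u" "distinct v" "shape_code u @ False # xs = shape_code v @ False # ys"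
  shows "shape_code u = shape_code v"
  using assms
proof (induction u arbitrary: v xs ys rule: distinct_max_split_induct)
  case Nil
  then show ?case
    by (cases "v = []") (auto elim: distinct_max_split simp: shape_code_max_split)
next
  case (max_split L m R)
  have "v \<noteq> []"
    using max_split.prems(2) max_split.hyps(2) by (auto simp: shape_code_max_split)
  with max_split.prems(1) obtain L' m' R' where v: "v = L' @ m' # R'"
    and less': "\<forall>x\<in>set L' \<union> set R'. x < m'"
    by (rule distinct_max_split)
  have "shape_code L @ False # (shape_code R @ False # xs) = shape_code L' @ False # (shape_code R' @ False # ys)"
    using max_split.prems(2) max_split.hyps(2) less' by (simp add: v shape_code_max_split)
  moreover from this have "shape_code L = shape_code L'"
    using max_split.IH(1) max_split.prems(1) v by simp
  ultimately have "shape_code R = shape_code R'"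
    using max_split.IH(2) max_split.prems(1) v by simp
  with \<open>shape_code L = shape_code L'\<close> show ?case
    using max_split.hyps(2) less' by (simp add: v shape_code_max_split)
qed

lemma stack_sort_shape_code_inject:
  assumes "distinct u" "distinct v"
    and "stack_sort u = stack_sort v" "shape_code u = shape_code v"
  shows "u = v"
  using assms
proof (induction u arbitrary: v rule: distinct_max_split_induct)
  case Nil
  then show ?case
    using length_shape_code[of v] by simp
next
  case (max_split L m R)
  have "v \<noteq> []"
    using max_split.prems(3) max_split.hyps(2) by (auto simp: shape_code_max_split)
  with max_split.prems(1) obtain L' m' R' where v: "v = L' @ m' # R'"
    and less': "\<forall>x\<in>set L' \<union> set R'. x < m'"
    by (rule distinct_max_split)
  have sort_eq: "stack_sort L @ stack_sort R @ [m] = stack_sort L' @ stack_sort R' @ [m']"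
    using max_split.prems(2) max_split.hyps(2) less' by (simp add: v stack_sort_max_split)
  have code_eq: "shape_code L @ False # shape_code R = shape_code L' @ False # shape_code R'"
    using max_split.prems(3) max_split.hyps(2) less' by (simp add: v shape_code_max_split)
  have dist: "distinct L" "distinct R" "distinct L'" "distinct R'"
    using max_split.hyps(1) max_split.prems(1) by (simp_all add: v)
  have code_L: "shape_code L = shape_code L'"
    using shape_code_prefix_free[OF dist(1,3) code_eq] .
  with code_eq have code_R: "shape_code R = shape_code R'"
    by simp
  from code_L have "length (stack_sort L) = length (stack_sort L')"
    using length_shape_code[of L] length_shape_code[of L'] dist by simp
  with sort_eq have "stack_sort L = stack_sort L'" "stack_sort R = stack_sort R'" "m = m'"
    by (simp_all add: append_eq_append_conv)
  with code_L code_R dist have "L = L'" "R = R'" "m = m'"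
    using max_split.IH by blast+
  then show ?case
    by (simp add: v)
qed

section \<open>Pairs of permutations with the same image\<close>

lemma sum_card_fibre_squared:
  assumes "finite X" "finite Y" "f ` X \<subseteq> Y"
  shows "(\<Sum>y\<in>Y. card {x\<in>X. f x = y} ^ 2) = card {(x, x') \<in> X \<times> X. f x = f x'}"
proof -
  have "{(x, x') \<in> X \<times> X. f x = f x'} = (\<Union>y\<in>Y. {x\<in>X. f x = y} \<times> {x\<in>X. f x = y})"
    using assms(3) by auto
  also have "card \<dots> = (\<Sum>y\<in>Y. card ({x\<in>X. f x = y} \<times> {x\<in>X. f x = y}))"
    using assms(1,2) by (intro card_UN_disjoint) auto
  finally show ?thesis
    by (simp add: card_cartesian_product power2_eq_square)
qed

lemma map_deg_eq_card_kernel: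
  assumes "finite X" "finite Y" "f ` X \<subseteq> Y"
  shows "map_deg f X Y = card {(x, x') \<in> X \<times> X. f x = f x'} / card X"
  unfolding map_deg_def sum_card_fibre_squared[OF assms, symmetric] by simp

definition same_sort_pairs :: "nat set \<Rightarrow> (nat list \<times> nat list) set" where
  "same_sort_pairs A =
     {(w, w') \<in> permutations_of_set A \<times> permutations_of_set A. stack_sort w = stack_sort w'}"

definition same_sort_count :: "nat \<Rightarrow> nat" where
  "same_sort_count n = card (same_sort_pairs {1..n})"

lemma perms_eq_permutations_of_set: "perms n = permutations_of_set {1..n}"
  unfolding perms_def permutations_of_set_def by auto

lemma stack_sort_permutations_of_set:
  "w \<in> permutations_of_set A \<Longrightarrow> stack_sort w \<in> permutations_of_set A"
  by (simp add: permutations_of_set_def)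

lemma map_deg_stack_sort: "map_deg stack_sort (perms n) (perms n) = same_sort_count n / fact n"
  unfolding perms_eq_permutations_of_set same_sort_count_def same_sort_pairs_def
  by (subst map_deg_eq_card_kernel) (auto simp: stack_sort_permutations_of_set)

lemma finite_same_sort_pairs [simp]: "finite (same_sort_pairs A)"
  unfolding same_sort_pairs_def by (rule finite_subset[of _ "_ \<times> _"]) auto

lemma same_sort_pairs_image:
  assumes "strict_mono_on A f"
  shows "same_sort_pairs (f ` A) = map_prod (map f) (map f) ` same_sort_pairs A"
proof -
  have inj: "inj_on f A"
    using assms by (rule strict_mono_on_imp_inj_on)
  have sort_map: "stack_sort (map f w) = map f (stack_sort w)" if "w \<in> permutations_of_set A" for w
    using that assms by (intro stack_sort_map) (auto simp: permutations_of_set_def)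
  have "map f (stack_sort w) = map f (stack_sort w') \<longleftrightarrow> stack_sort w = stack_sort w'"
    if "w \<in> permutations_of_set A" "w' \<in> permutations_of_set A" for w w'
    using that inj by (intro inj_on_map_eq_map) (auto simp: permutations_of_set_def)
  with sort_map show ?thesis
    unfolding same_sort_pairs_def permutations_of_set_image_inj[OF inj] by fastforce
qed

lemma card_same_sort_pairs_image:
  assumes "strict_mono_on A f"
  shows "card (same_sort_pairs (f ` A)) = card (same_sort_pairs A)"
proof -
  have inj_map: "inj_on (map f) (permutations_of_set A)"
    using strict_mono_on_imp_inj_on[OF assms]
    by (intro inj_on_mapI) (auto simp: permutations_of_set_def intro: inj_on_subset)
  have "inj_on (map_prod (map f) (map f)) (same_sort_pairs A)"
    by (rule inj_on_subset[OF map_prod_inj_on[OF inj_map inj_map]]) (auto simp: same_sort_pairs_def)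
  then show ?thesis
    by (simp add: same_sort_pairs_image[OF assms] card_image)
qed

lemma card_same_sort_pairs:
  assumes "finite A"
  shows "card (same_sort_pairs A) = same_sort_count (card A)"
proof -
  define xs where "xs = sorted_list_of_set A"
  define f where "f i = xs ! (i - 1)" for i
  have xs: "sorted_wrt (<) xs" "set xs = A" "length xs = card A"
    using assms by (simp_all add: xs_def)
  have "strict_mono_on {1..card A} f"
    using xs by (intro strict_mono_onI) (auto simp: f_def sorted_wrt_nth_less)
  moreover have "f ` {1..card A} = A"
  proof -
    have "f ` {1..card A} = (!) xs ` {0..<card A}"
      by (force simp: f_def image_iff Bex_def intro: exI[of _ "Suc _"])
    also have "\<dots> = set xs"
      using xs(3) by (auto simp: set_conv_nth)
    finally show ?thesis
      using xs(2) by simp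
  qed
  ultimately show ?thesis
    unfolding same_sort_count_def by (metis card_same_sort_pairs_image)
qed

lemma sum_Pow_by_card:
  fixes g :: "nat \<Rightarrow> 'a::comm_semiring_1"
  assumes "finite S"
  shows "(\<Sum>A\<in>Pow S. g (card A)) = (\<Sum>k\<le>card S. of_nat (card S choose k) * g k)"
proof -
  have "(\<Sum>A\<in>Pow S. g (card A)) = (\<Sum>k\<le>card S. \<Sum>A\<in>{A\<in>Pow S. card A = k}. g (card A))"
    using assms by (intro sum.group[symmetric]) (auto intro: card_mono)
  also have "\<dots> = (\<Sum>k\<le>card S. of_nat (card S choose k) * g k)"
  proof (rule sum.cong[OF refl])
    fix k
    have "(\<Sum>A\<in>{A\<in>Pow S. card A = k}. g (card A)) = of_nat (card {A. A \<subseteq> S \<and> card A = k}) * g k"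
      by simp
    then show "(\<Sum>A\<in>{A\<in>Pow S. card A = k}. g (card A)) = of_nat (card S choose k) * g k"
      using n_subsets[OF assms] by simp
  qed
  finally show ?thesis .
qed

lemma card_same_sort_pairs_complements:
  assumes "finite S"
  shows "card (SIGMA A:Pow S. same_sort_pairs A \<times> same_sort_pairs (S - A))
    = (\<Sum>k\<le>card S. (card S choose k) * (same_sort_count k * same_sort_count (card S - k)))"
proof -
  have "card (SIGMA A:Pow S. same_sort_pairs A \<times> same_sort_pairs (S - A))
      = (\<Sum>A\<in>Pow S. same_sort_count (card A) * same_sort_count (card S - card A))"
    using assms by (auto simp: card_same_sort_pairs card_cartesian_product card_Diff_subset
        finite_subset intro!: sum.cong)
  also have "\<dots> = (\<Sum>k\<le>card S. (card S choose k) * (same_sort_count k * same_sort_count (card S - k)))"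
    using sum_Pow_by_card[OF assms, of "\<lambda>k. same_sort_count k * same_sort_count (card S - k)"]
    by simp
  finally show ?thesis .
qed

lemma same_sort_pairs_max_split:
  assumes "(L, L') \<in> same_sort_pairs A" "(R, R') \<in> same_sort_pairs B"
    and "A \<inter> B = {}" "\<forall>x\<in>A \<union> B. x < m"
  shows "(L @ m # R, L' @ m # R') \<in> same_sort_pairs (insert m (A \<union> B))"
proof -
  have "\<forall>x\<in>set L \<union> set R. x < m" "\<forall>x\<in>set L' \<union> set R'. x < m"
    using assms by (auto simp: same_sort_pairs_def permutations_of_set_def)
  with assms show ?thesis
    by (auto simp: same_sort_pairs_def permutations_of_set_def stack_sort_max_split)
qed

lemma same_sort_count_convolution:
  "(\<Sum>k\<le>n. (n choose k) * (same_sort_count k * same_sort_count (n - k))) \<le> same_sort_count (Suc n)"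
proof -
  define S where "S = {1..n}"
  define join where "join = (\<lambda>(A :: nat set, (L, L'), (R, R')). (L @ Suc n # R, L' @ Suc n # R'))"
  let ?Sg = "SIGMA A:Pow S. same_sort_pairs A \<times> same_sort_pairs (S - A)"
  have "inj_on join ?Sg"
  proof (rule inj_onI)
    fix p q assume "p \<in> ?Sg" "q \<in> ?Sg" "join p = join q"
    moreover obtain A L L' R R' where p: "p = (A, (L, L'), (R, R'))"
      by (metis prod.collapse)
    moreover obtain B M M' Q Q' where q: "q = (B, (M, M'), (Q, Q'))"
      by (metis prod.collapse)
    ultimately have "A = set L" "B = set M" "Suc n \<notin> set L \<union> set L' \<union> set R \<union> set R'"
      and "L @ Suc n # R = M @ Suc n # Q" "L' @ Suc n # R' = M' @ Suc n # Q'"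
      by (auto simp: join_def same_sort_pairs_def permutations_of_set_def S_def)
    then show "p = q"
      by (auto simp: p q append_Cons_eq_iff)
  qed
  moreover have "join ` ?Sg \<subseteq> same_sort_pairs {1..Suc n}"
  proof
    fix y assume "y \<in> join ` ?Sg"
    then obtain A L L' R R' where y: "y = join (A, (L, L'), (R, R'))" and A: "A \<subseteq> S"
      and "(L, L') \<in> same_sort_pairs A" "(R, R') \<in> same_sort_pairs (S - A)"
      by auto
    then have "(L @ Suc n # R, L' @ Suc n # R') \<in> same_sort_pairs (insert (Suc n) (A \<union> (S - A)))"
      by (intro same_sort_pairs_max_split) (auto simp: S_def)
    moreover have "insert (Suc n) (A \<union> (S - A)) = {1..Suc n}"
      using A by (auto simp: S_def)
    ultimately show "y \<in> same_sort_pairs {1..Suc n}"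
      by (simp add: y join_def)
  qed
  ultimately have "card ?Sg \<le> same_sort_count (Suc n)"
    unfolding same_sort_count_def by (intro card_inj_on_le) auto
  moreover have "card ?Sg = (\<Sum>k\<le>n. (n choose k) * (same_sort_count k * same_sort_count (n - k)))"
    using card_same_sort_pairs_complements[of S] by (simp add: S_def)
  ultimately show ?thesis
    by simp
qed

lemma same_sort_count_le: "same_sort_count n \<le> fact n * 4 ^ n"
proof -
  let ?codes = "{bs :: bool list. set bs \<subseteq> UNIV \<and> length bs = 2 * n}"
  let ?encode = "\<lambda>(w, w'). (w, shape_code w')"
  have "inj_on ?encode (same_sort_pairs {1..n})"
    by (rule inj_onI)
      (auto simp: same_sort_pairs_def permutations_of_set_def intro: stack_sort_shape_code_inject)
  moreover have "?encode ` same_sort_pairs {1..n} \<subseteq> permutations_of_set {1..n} \<times> ?codes"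
    by (auto simp: same_sort_pairs_def permutations_of_set_def length_shape_code
        simp flip: distinct_card)
  moreover have "finite ?codes"
    using finite_lists_length_eq[of "UNIV :: bool set"] by simp
  ultimately have "same_sort_count n \<le> card (permutations_of_set {1..n} \<times> ?codes)"
    unfolding same_sort_count_def by (intro card_inj_on_le) auto
  also have "\<dots> = fact n * 4 ^ n"
    using card_lists_length_eq[of "UNIV :: bool set" "2 * n"]
    by (simp add: card_cartesian_product power_mult del: subset_UNIV)
  finally show ?thesis .
qed

lemma same_sort_count_0: "same_sort_count 0 = 1"
proof -
  have "same_sort_pairs {1..0} = {([], [])}"
    by (auto simp: same_sort_pairs_def)
  then show ?thesis
    by (simp add: same_sort_count_def)
qed

lemma same_sort_count_2: "4 \<le> same_sort_count 2"
proof -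
  have "stack_sort [1] = [1]" "stack_sort [1, 2] = [1, 2]" "stack_sort [2, 1] = [1, 2]"
    using stack_sort_max_split[of "[]" "[]" 1] stack_sort_max_split[of "[1]" "[]" 2]
      stack_sort_max_split[of "[]" "[1]" 2] by simp_all
  then have "{[1, 2], [2, 1]} \<times> {[1, 2], [2, 1]} \<subseteq> same_sort_pairs {1..2}"
    by (auto simp: same_sort_pairs_def permutations_of_set_def)
  from card_mono[OF finite_same_sort_pairs this] show ?thesis
    by (simp add: same_sort_count_def)
qed

section \<open>Sequences that are superadditive up to a logarithm\<close>

lemma real_div_mult_ge:
  fixes c :: real
  assumes "0 < p"
  shows "real n / real p * c - \<bar>c\<bar> \<le> real (n div p) * c"
proof -
  have "real n = real (n div p) * real p + real (n mod p)" "real (n mod p) < real p"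
    using assms by (simp_all flip: of_nat_mult of_nat_add)
  then have "real (n div p) \<le> real n / real p" "real n / real p < real (n div p) + 1"
    using assms by (simp_all add: field_simps)
  then have "\<bar>(real n / real p - real (n div p)) * c\<bar> \<le> 1 * \<bar>c\<bar>"
    unfolding abs_mult by (intro mult_right_mono) auto
  then show ?thesis
    by (simp add: left_diff_distrib abs_le_iff)
qed

locale log_superadditive =
  fixes H :: "nat \<Rightarrow> real" and C :: real
  assumes nonneg: "\<And>n. 0 \<le> H n"
    and le_linear: "\<And>n. H n \<le> C * real n"
    and superadditive: "\<And>p q. 1 \<le> p \<Longrightarrow> 1 \<le> q \<Longrightarrow> H p + H q \<le> H (p + q) + ln (real (p + q))"
begin

(* The induction halves q into q1 \<le> q2 with q \<le> 3 q1; together with the bonus 2 ln q, the term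
   ln (81 p) = 4 ln 3 + ln p is just large enough to absorb the loss ln (q p) of merging the halves. *)
lemma block_lower_bound:
  assumes "1 \<le> p" "1 \<le> q"
  shows "real q * (H p - ln (81 * real p)) + ln (81 * real p) + 2 * ln (real q) \<le> H (q * p)"
  using assms(2)
proof (induction q rule: less_induct)
  case (less q)
  let ?D = "ln (81 * real p)"
  show ?case
  proof (cases "q = 1")
    case True
    then show ?thesis by simp
  next
    case False
    define q1 where "q1 = q div 2"
    define q2 where "q2 = q - q1"
    have q: "1 \<le> q1" "q1 < q" "1 \<le> q2" "q2 < q" "q = q1 + q2" "q \<le> 3 * q1" "q1 \<le> q2"
      using False less.prems by (auto simp: q1_def q2_def)
    have IH: "real q1 * (H p - ?D) + ?D + 2 * ln (real q1) \<le> H (q1 * p)"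
             "real q2 * (H p - ?D) + ?D + 2 * ln (real q2) \<le> H (q2 * p)"
      using less.IH q by simp_all
    have "H (q1 * p) + H (q2 * p) \<le> H (q * p) + ln (real (q * p))"
      using superadditive[of "q1 * p" "q2 * p"] q assms(1) by (simp add: add_mult_distrib)
    moreover have "ln (real (q * p)) = ln (real q) + ln (real p)"
      using q assms(1) by (simp add: ln_mult)
    moreover have "?D = 4 * ln 3 + ln (real p)"
      using assms(1) by (simp add: ln_mult ln_realpow[of 3 4, simplified])
    moreover have "ln (real q) \<le> ln (3 * real q1)" "ln (real q) \<le> ln (3 * real q2)"
      using q by simp_all
    then have "ln (real q) \<le> ln 3 + ln (real q1)" "ln (real q) \<le> ln 3 + ln (real q2)"
      using q by (simp_all add: ln_mult)
    moreover have "0 \<le> ln (real q)"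
      using q by simp
    moreover have "real q * (H p - ?D) = real q1 * (H p - ?D) + real q2 * (H p - ?D)"
      using q by (simp add: algebra_simps)
    ultimately show ?thesis
      using IH by linarith
  qed
qed

lemma div_blocks_lower_bound:
  assumes "1 \<le> p" "1 \<le> n"
  shows "real (n div p) * (H p - ln (81 * real p)) - ln (real n) \<le> H n"
proof -
  define q where "q = n div p"
  have ln_n: "0 \<le> ln (real n)"
    using assms(2) by simp
  show ?thesis
    unfolding q_def[symmetric]
  proof (cases "q = 0")
    case True
    with ln_n nonneg[of n] show "real q * (H p - ln (81 * real p)) - ln (real n) \<le> H n"
      by simp
  next
    case False
    have "0 \<le> ln (81 * real p)" "0 \<le> ln (real q)"
      using False assms(1) by simp_all
    moreover have "real q * (H p - ln (81 * real p)) + ln (81 * real p) + 2 * ln (real q) \<le> H (q * p)"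
      using block_lower_bound[of p q] False assms(1) by simp
    ultimately have block: "real q * (H p - ln (81 * real p)) \<le> H (q * p)"
      by linarith
    have n: "n = q * p + n mod p"
      by (simp add: q_def)
    show "real q * (H p - ln (81 * real p)) - ln (real n) \<le> H n"
    proof (cases "n mod p = 0")
      case True
      with n block ln_n show ?thesis
        by simp
    next
      case False
      then have "H (q * p) + H (n mod p) \<le> H n + ln (real n)"
        using superadditive[of "q * p" "n mod p"] \<open>q \<noteq> 0\<close> assms(1) n by simp
      with block nonneg[of "n mod p"] show ?thesis
        by linarith
    qed
  qed
qed

lemma lower_bound_via_blocks:
  assumes "1 \<le> p" "1 \<le> n"
  defines "c \<equiv> H p - ln (81 * real p)"
  shows "c / real p - (\<bar>c\<bar> + ln (real n)) / real n \<le> H n / real n"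
proof -
  have "real n / real p * c - \<bar>c\<bar> - ln (real n) \<le> real (n div p) * c - ln (real n)"
    using real_div_mult_ge[of p n c] assms(1) by simp
  also have "\<dots> \<le> H n"
    unfolding c_def using assms(1,2) by (rule div_blocks_lower_bound)
  finally have "(real n / real p * c - \<bar>c\<bar> - ln (real n)) / real n \<le> H n / real n"
    by (intro divide_right_mono) auto
  moreover have "(real n / real p * c - \<bar>c\<bar> - ln (real n)) / real n
      = c / real p - (\<bar>c\<bar> + ln (real n)) / real n"
    using assms(2) by (simp add: field_simps)
  ultimately show ?thesis
    by simp
qed

definition growth_rate :: real where
  "growth_rate = (SUP p\<in>{1..}. (H p - ln (81 * real p)) / real p)"

lemma bdd_above_rates: "bdd_above ((\<lambda>p. (H p - ln (81 * real p)) / real p) ` {1..})"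
proof (rule bdd_aboveI2)
  fix p :: nat assume "p \<in> {1..}"
  then have "0 \<le> ln (81 * real p) / real p" "H p / real p \<le> C"
    using le_linear[of p] by (simp_all add: divide_le_eq)
  then show "(H p - ln (81 * real p)) / real p \<le> C"
    by (simp add: diff_divide_distrib)
qed

lemma upper_bound_via_growth_rate:
  assumes "1 \<le> n"
  shows "H n / real n \<le> growth_rate + ln (81 * real n) / real n"
proof -
  have "(H n - ln (81 * real n)) / real n \<le> growth_rate"
    unfolding growth_rate_def using assms by (intro cSUP_upper bdd_above_rates) simp
  then show ?thesis
    by (simp add: diff_divide_distrib)
qed

lemma tendsto_growth_rate: "(\<lambda>n. H n / real n) \<longlonglongrightarrow> growth_rate"
proof (rule order_tendstoI)
  fix l assume "l < growth_rate"
  then obtain p where p: "1 \<le> p" and "l < (H p - ln (81 * real p)) / real p"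
    unfolding growth_rate_def using less_cSUP_iff[OF _ bdd_above_rates] by auto
  moreover define c where "c = H p - ln (81 * real p)"
  ultimately have "l < c / real p" by simp
  moreover have "(\<lambda>n. c / real p - (\<bar>c\<bar> + ln (real n)) / real n) \<longlonglongrightarrow> c / real p"
    by real_asymp
  ultimately have "\<forall>\<^sub>F n in sequentially. l < c / real p - (\<bar>c\<bar> + ln (real n)) / real n"
    by (simp add: order_tendstoD(1))
  then show "\<forall>\<^sub>F n in sequentially. l < H n / real n"
    using eventually_ge_at_top[of 1]
    by eventually_elim (use lower_bound_via_blocks[OF p] in \<open>force simp: c_def\<close>)
next
  fix u assume "growth_rate < u"
  moreover have "(\<lambda>n. growth_rate + ln (81 * real n) / real n) \<longlonglongrightarrow> growth_rate + 0"
    by (intro tendsto_add tendsto_const) real_asymp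
  ultimately have "\<forall>\<^sub>F n in sequentially. growth_rate + ln (81 * real n) / real n < u"
    by (simp add: order_tendstoD(2))
  then show "\<forall>\<^sub>F n in sequentially. H n / real n < u"
    using eventually_ge_at_top[of 1] by eventually_elim (use upper_bound_via_growth_rate in force)
qed

end

section \<open>Sequences dominated by their own convolution\<close>

lemma power_powr_inverse: "0 \<le> x \<Longrightarrow> 0 < n \<Longrightarrow> (x ^ n) powr (1 / real n) = x"
  by (simp add: powr_powr flip: powr_realpow')

(* Coefficientwise A' \<ge> A^2 for the power series A = \<Sum> a_n x^n. *)
locale superconvolutive =
  fixes a :: "nat \<Rightarrow> real"
  assumes one_le_0: "1 \<le> a 0"
    and convolution_le: "\<And>n. (\<Sum>k\<le>n. a k * a (n - k)) \<le> real (Suc n) * a (Suc n)"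
begin

lemma convolution_lower_bound:
  assumes "\<And>k. k \<le> n \<Longrightarrow> 0 \<le> u k" "\<And>k. k \<le> n \<Longrightarrow> u k \<le> a k"
  shows "(\<Sum>k\<le>n. u k * u (n - k)) \<le> real (Suc n) * a (Suc n)"
proof -
  have "(\<Sum>k\<le>n. u k * u (n - k)) \<le> (\<Sum>k\<le>n. a k * a (n - k))"
    using assms by (intro sum_mono mult_mono) (auto intro: order_trans)
  also have "\<dots> \<le> real (Suc n) * a (Suc n)"
    by (rule convolution_le)
  finally show ?thesis .
qed

lemma one_le: "1 \<le> a n"
proof (induction n rule: less_induct)
  case (less n)
  show ?case
  proof (cases n)
    case 0
    then show ?thesis using one_le_0 by simp
  next
    case (Suc m)
    have "real (Suc m) = (\<Sum>k\<le>m. 1 * 1)"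
      by simp
    also have "\<dots> \<le> real (Suc m) * a (Suc m)"
      using less Suc by (intro convolution_lower_bound) auto
    finally show ?thesis
      using Suc by simp
  qed
qed

lemma pos: "0 < a n"
  using one_le[of n] by simp

lemma mult_le: "a i * a j \<le> real (Suc (i + j)) * a (Suc (i + j))"
proof -
  have "a i * a (i + j - i) \<le> (\<Sum>k\<le>i + j. a k * a (i + j - k))"
    using pos by (intro member_le_sum) (auto intro: less_imp_le)
  also have "\<dots> \<le> real (Suc (i + j)) * a (Suc (i + j))"
    by (rule convolution_le)
  finally show ?thesis
    by simp
qed

lemma log_superadditive_ln:
  assumes le_pow: "\<And>n. a n \<le> B ^ n"
  shows "log_superadditive (\<lambda>n. ln (a (n - 1))) (ln B)"
proof
  have "1 \<le> B"
    using one_le[of 1] le_pow[of 1] by simp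
  show "0 \<le> ln (a (n - 1))" for n
    using one_le by simp
  show "ln (a (n - 1)) \<le> ln B * real n" for n
  proof -
    have "ln (a (n - 1)) \<le> ln (B ^ (n - 1))"
      using le_pow[of "n - 1"] pos[of "n - 1"] \<open>1 \<le> B\<close> by simp
    also have "\<dots> = ln B * real (n - 1)"
      using \<open>1 \<le> B\<close> by (simp add: ln_realpow)
    also have "\<dots> \<le> ln B * real n"
      using \<open>1 \<le> B\<close> by (intro mult_left_mono) auto
    finally show ?thesis .
  qed
  show "ln (a (p - 1)) + ln (a (q - 1)) \<le> ln (a (p + q - 1)) + ln (real (p + q))"
    if "1 \<le> p" "1 \<le> q" for p q
  proof -
    have "Suc (p - 1 + (q - 1)) = p + q - 1"
      using that by simp
    then have "ln (a (p - 1) * a (q - 1)) \<le> ln (real (p + q - 1) * a (p + q - 1))"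
      using mult_le[of "p - 1" "q - 1"] pos that by simp
    also have "\<dots> \<le> ln (a (p + q - 1)) + ln (real (p + q))"
      using pos that by (simp add: ln_mult)
    finally show ?thesis
      using pos[of "p - 1"] pos[of "q - 1"] by (simp add: ln_mult)
  qed
qed

theorem root_tendsto:
  assumes le_pow: "\<And>n. a n \<le> B ^ n"
  shows "\<exists>L. (\<lambda>n. a n powr (1 / real n)) \<longlonglongrightarrow> L \<and> L \<le> B"
proof -
  define H where "H n = ln (a (n - 1))" for n
  interpret log_superadditive H "ln B"
    unfolding H_def by (rule log_superadditive_ln[OF le_pow])
  have "(\<lambda>n. H (Suc n) / real (Suc n) * (real (Suc n) / real n)) \<longlonglongrightarrow> growth_rate * 1"
    by (intro tendsto_mult LIMSEQ_Suc[OF tendsto_growth_rate] LIMSEQ_Suc_n_over_n)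
  moreover have "(\<lambda>n. H (Suc n) / real (Suc n) * (real (Suc n) / real n)) = (\<lambda>n. ln (a n) / real n)"
    by (simp add: H_def fun_eq_iff del: of_nat_Suc)
  ultimately have "(\<lambda>n. exp (ln (a n) / real n)) \<longlonglongrightarrow> exp growth_rate"
    by (intro tendsto_exp) simp
  moreover have "a n powr (1 / real n) = exp (ln (a n) / real n)" for n
    using pos[of n] by (simp add: powr_def)
  ultimately have lim: "(\<lambda>n. a n powr (1 / real n)) \<longlonglongrightarrow> exp growth_rate"
    by simp
  moreover have "exp growth_rate \<le> B"
  proof (rule tendsto_upperbound[OF lim])
    show "\<forall>\<^sub>F n in sequentially. a n powr (1 / real n) \<le> B"
    proof (rule eventually_mono[OF eventually_gt_at_top[of 0]])
      fix n :: nat assume "0 < n"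
      have "a n powr (1 / real n) \<le> (B ^ n) powr (1 / real n)"
        using le_pow pos[of n] by (intro powr_mono2) auto
      also have "\<dots> = B"
        using one_le[of 1] le_pow[of 1] \<open>0 < n\<close> by (simp add: power_powr_inverse)
      finally show "a n powr (1 / real n) \<le> B" .
    qed
  qed simp
  ultimately show ?thesis
    by blast
qed

end

(* The ansatz is 1, 1, 2 for k = 0, 1, 2 and (9/8)^(k+1) for k \<ge> 3; its total defect 61/729 is
   positive, which is what makes it a subsolution of the convolution inequality from n = 6 on. *)
definition ansatz_defect :: "nat \<Rightarrow> real" where
  "ansatz_defect k = (if k = 0 then -1/9 else if k = 1 then -17/81 else if k = 2 then 295/729 else 0)"

definition ansatz :: "nat \<Rightarrow> real" where
  "ansatz k = (1 + ansatz_defect k) * (9/8) ^ Suc k"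

lemma sum_ansatz_defect: "2 \<le> n \<Longrightarrow> (\<Sum>k\<le>n. ansatz_defect k) = 61/729"
  by (induction n rule: dec_induct) (simp_all add: ansatz_defect_def numeral_2_eq_2)

lemma ansatz_defect_convolution:
  assumes "5 \<le> n"
  shows "(\<Sum>k\<le>n. (1 + ansatz_defect k) * (1 + ansatz_defect (n - k))) = real (Suc n) + 122/729"
proof -
  have reflect: "(\<Sum>k\<le>n. ansatz_defect (n - k)) = (\<Sum>k\<le>n. ansatz_defect k)"
    by (rule sum.reindex_bij_witness[where i="\<lambda>k. n - k" and j="\<lambda>k. n - k"]) auto
  have "(\<Sum>k\<le>n. (1 + ansatz_defect k) * (1 + ansatz_defect (n - k)))
      = (\<Sum>k\<le>n. 1 + ansatz_defect k + ansatz_defect (n - k))"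
    using assms by (intro sum.cong) (auto simp: ansatz_defect_def algebra_simps)
  also have "\<dots> = real (Suc n) + 2 * (61/729)"
    using reflect sum_ansatz_defect[of n] assms by (simp add: sum.distrib)
  finally show ?thesis
    by simp
qed

lemma ansatz_nonneg: "0 \<le> ansatz k"
  by (simp add: ansatz_def ansatz_defect_def)

lemma ansatz_convolution:
  assumes "5 \<le> m"
  shows "(\<Sum>k\<le>m. ansatz k * ansatz (m - k)) = (9/8) ^ Suc (Suc m) * (real (Suc m) + 122/729)"
proof -
  have "ansatz k * ansatz (m - k)
      = (9/8) ^ Suc (Suc m) * ((1 + ansatz_defect k) * (1 + ansatz_defect (m - k)))"
    if "k \<le> m" for k
  proof -
    have "(9/8::real) ^ Suc k * (9/8) ^ Suc (m - k) = (9/8) ^ (Suc k + Suc (m - k))"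
      by (rule power_add[symmetric])
    also have "Suc k + Suc (m - k) = Suc (Suc m)"
      using that by simp
    finally have pow: "(9/8::real) ^ Suc k * (9/8) ^ Suc (m - k) = (9/8) ^ Suc (Suc m)" .
    show ?thesis
      by (simp only: ansatz_def ac_simps flip: pow)
  qed
  then have "(\<Sum>k\<le>m. ansatz k * ansatz (m - k))
      = (\<Sum>k\<le>m. (9/8) ^ Suc (Suc m) * ((1 + ansatz_defect k) * (1 + ansatz_defect (m - k))))"
    by (intro sum.cong) auto
  also have "\<dots> = (9/8) ^ Suc (Suc m) * (\<Sum>k\<le>m. (1 + ansatz_defect k) * (1 + ansatz_defect (m - k)))"
    by (rule sum_distrib_left[symmetric])
  also have "\<dots> = (9/8) ^ Suc (Suc m) * (real (Suc m) + 122/729)"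
    by (simp only: ansatz_defect_convolution[OF assms])
  finally show ?thesis .
qed

context superconvolutive
begin

lemma initial_lower_bounds:
  assumes "2 \<le> a 2"
  shows "5/3 \<le> a 3" "11/6 \<le> a 4" "11/5 \<le> a 5"
proof -
  define u where "u = (!) [1, 1, 2, 5/3, 11/6 :: real]"
  have step: "(\<Sum>k\<le>n. u k * u (n - k)) \<le> real (Suc n) * a (Suc n)"
    if "n \<le> 4" "list_all (\<lambda>k. u k \<le> a k) [0..<Suc n]" for n
  proof (rule convolution_lower_bound)
    show "u k \<le> a k" if "k \<le> n" for k
      using that \<open>list_all _ _\<close> by (simp add: list_all_iff del: upt_Suc)
    show "0 \<le> u k" if "k \<le> n" for k
      using that \<open>n \<le> 4\<close> by (simp add: u_def nth_Cons split: nat.split)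
  qed
  have "u 0 \<le> a 0" "u 1 \<le> a 1" "u 2 \<le> a 2"
    using one_le[of 0] one_le[of 1] assms by (simp_all add: u_def)
  moreover from this have "u 3 \<le> a 3"
    using step[of 2] by (simp add: u_def eval_nat_numeral)
  moreover from calculation have "u 4 \<le> a 4"
    using step[of 3] by (simp add: u_def eval_nat_numeral)
  moreover from calculation have "11/5 \<le> a 5"
    using step[of 4] by (simp add: u_def eval_nat_numeral)
  ultimately show "5/3 \<le> a 3" "11/6 \<le> a 4" "11/5 \<le> a 5"
    by (simp_all add: u_def)
qed

lemma ansatz_le:
  assumes "2 \<le> a 2"
  shows "ansatz n \<le> a n"
proof (induction n rule: less_induct)
  case (less n)
  show ?case
  proof (cases "n \<le> 5")
    case True
    then have "n \<in> {0, 1, 2, 3, 4, 5}"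
      by auto
    then show ?thesis
      using one_le[of 0] one_le[of 1] assms initial_lower_bounds[OF assms]
      by (auto simp: ansatz_def ansatz_defect_def power_divide)
  next
    case False
    then obtain m where n: "n = Suc m"
      by (cases n) auto
    with False have "5 \<le> m"
      by simp
    have "real n * ansatz n \<le> (9/8) ^ Suc n * (real n + 122/729)"
      using n \<open>5 \<le> m\<close> by (simp add: ansatz_def ansatz_defect_def algebra_simps)
    also have "\<dots> = (\<Sum>k\<le>m. ansatz k * ansatz (m - k))"
      using ansatz_convolution[OF \<open>5 \<le> m\<close>] by (simp add: n)
    also have "\<dots> \<le> real n * a n"
      unfolding n using less n ansatz_nonneg by (intro convolution_lower_bound) auto
    finally show ?thesis
      using n by simp
  qed
qed

theorem root_limit_ge:
  assumes "2 \<le> a 2" and lim: "(\<lambda>n. a n powr (1 / real n)) \<longlonglongrightarrow> L"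
  shows "9/8 \<le> L"
proof (rule tendsto_lowerbound[OF lim])
  show "\<forall>\<^sub>F n in sequentially. 9/8 \<le> a n powr (1 / real n)"
  proof (rule eventually_mono[OF eventually_ge_at_top[of 2]])
    fix n :: nat assume "2 \<le> n"
    then have "(9/8) ^ n \<le> ansatz n"
      by (simp add: ansatz_def ansatz_defect_def)
    also have "\<dots> \<le> a n"
      using assms(1) by (rule ansatz_le)
    finally have "((9/8) ^ n) powr (1 / real n) \<le> a n powr (1 / real n)"
      by (intro powr_mono2) auto
    then show "9/8 \<le> a n powr (1 / real n)"
      using \<open>2 \<le> n\<close> by (simp add: power_powr_inverse)
  qed
qed simp

end

lemma superconvolutive_same_sort_count: "superconvolutive (\<lambda>n. same_sort_count n / fact n)"
proof
  show "1 \<le> same_sort_count 0 / fact 0"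
    by (simp add: same_sort_count_0)
next
  fix n
  let ?c = same_sort_count
  have "(\<Sum>k\<le>n. ?c k / fact k * (?c (n - k) / fact (n - k)))
      = (\<Sum>k\<le>n. real ((n choose k) * (?c k * ?c (n - k)))) / fact n"
    unfolding sum_divide_distrib by (intro sum.cong) (auto simp: binomial_fact)
  also have "\<dots> \<le> ?c (Suc n) / fact n"
  proof (rule divide_right_mono)
    show "(\<Sum>k\<le>n. real ((n choose k) * (?c k * ?c (n - k)))) \<le> real (?c (Suc n))"
      unfolding of_nat_sum[symmetric] of_nat_le_iff by (rule same_sort_count_convolution)
  qed simp
  also have "\<dots> = real (Suc n) * (?c (Suc n) / fact (Suc n))"
    by (simp add: fact_Suc field_simps del: of_nat_Suc)
  finally show "(\<Sum>k\<le>n. ?c k / fact k * (?c (n - k) / fact (n - k)))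
      \<le> real (Suc n) * (?c (Suc n) / fact (Suc n))" .
qed

theorem mainTheorem10:
  shows "\<exists>L::real.
           (\<lambda>n. map_deg stack_sort (perms n) (perms n) powr (1 / real n)) \<longlonglongrightarrow> L
           \<and> 1.12462 \<le> L \<and> L \<le> 4"
proof -
  define a where "a n = same_sort_count n / fact n" for n
  interpret superconvolutive a
    unfolding a_def by (rule superconvolutive_same_sort_count)
  have "a n \<le> 4 ^ n" for n
  proof -
    have "real (same_sort_count n) \<le> fact n * 4 ^ n"
      using of_nat_mono[OF same_sort_count_le[of n], where 'a=real] by simp
    then show ?thesis
      by (simp add: a_def divide_le_eq mult.commute)
  qed
  then obtain L where lim: "(\<lambda>n. a n powr (1 / real n)) \<longlonglongrightarrow> L" and "L \<le> 4"
    using root_tendsto by blast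
  moreover have "9/8 \<le> L"
    using same_sort_count_2 lim by (intro root_limit_ge) (simp_all add: a_def)
  ultimately show ?thesis
    by (intro exI[of _ L]) (simp add: a_def map_deg_stack_sort)
qed

end
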